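(* Consider any sequences evolved by Algorithm 1 and assume there is $\underline\lambda>0$ with $\lambda_k\ge\underline\lambda$ for all $k\ge1$. Let $d_0:=\|x^*-x^0\|$ and $\alpha:=\sqrt{\frac{\mu\underline\lambda}{1+\mu\underline\lambda}}\in(0,1)$. Then: (a) for all $k\ge1$, $h(y^k)-h(x^* )\le\frac{d_0^2}{2\underline\lambda}(1-\alpha)^{k-1}$ and $\max\{\|x^*-y^k\|,\|x^*-x^k\|\}\le\frac{d_0}{\sqrt{\mu\underline\lambda}}(1-\alpha)^{(k-1)/2}$; (b) for all $k\ge1$, $v^{k+1}\in\partial_{\varepsilon_{k+1}}f(y^{k+1})+\partial g(y^{k+1})$, $\|v^{k+1}\|\le\frac{\sqrt6\,\big(1+\sigma\sqrt{1+\mu\underline\lambda}\big)}{\mu^{1/2}\underline\lambda^{3/2}}\,d_0\,(1-\alpha)^{(k-1)/2}$, and $\varepsilon_{k+1}\le\frac{3\sigma^2d_0^2}{\mu\underline\lambda^2}(1-\alpha)^{k-1}$.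
   Context: Setting: $\mathcal H$ is a finite-dimensional real inner product space with inner product $\langle\cdot,\cdot\rangle$ and norm $\|\cdot\|$. $f,g:\mathcal H\to(-\infty,\infty]$ are proper, closed, convex functions, $h:=f+g$ has nonempty domain, and $g$ is $\mu$-strongly convex for some $\mu>0$, i.e. $g(tx+(1-t)y)\le tg(x)+(1-t)g(y)-\frac{\mu}{2}t(1-t)\|x-y\|^2$ for all $x,y\in\mathcal H$, $t\in[0,1]$. $x^*$ denotes the unique minimizer of $h$. For $\varepsilon\ge 0$, $\partial_\varepsilon f(y):=\{u\in\mathcal H: f(w)\ge f(y)+\langle u,w-y\rangle-\varepsilon\ \forall w\in\mathcal H\}$, and $\partial g:=\partial_0 g$. Algorithm 1: Choose $x^0,y^0\in\mathcal H$ and $\sigma\in[0,1]$, and set $A_0=0$. For $k=0,1,2,\dots$: choose $\lambda_{k+1}>0$, set $a_{k+1}=\frac{(1+2\mu A_k)\lambda_{k+1}+\sqrt{(1+2\mu A_k)^2\lambda_{k+1}^2+4(1+\mu A_k)A_k\lambda_{k+1}}}{2}$ and $\tilde x^k=\frac{a_{k+1}-\mu A_k\lambda_{k+1}}{A_k+a_{k+1}}x^k+\frac{A_k+\mu A_k\lambda_{k+1}}{A_k+a_{k+1}}y^k$; compute $(y^{k+1},v^{k+1},\varepsilon_{k+1})\in\mathcal H\times\mathcal H\times[0,\infty)$ such that $v^{k+1}\in\partial_{\varepsilon_{k+1}}f(y^{k+1})+\partial g(y^{k+1})$ and $\frac{\|\lambda_{k+1}v^{k+1}+y^{k+1}-\tilde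 x^k\|^2}{1+\lambda_{k+1}\mu}+2\lambda_{k+1}\varepsilon_{k+1}\le\sigma^2\|y^{k+1}-\tilde x^k\|^2$; then set $A_{k+1}=A_k+a_{k+1}$ and $x^{k+1}=\frac{1+\mu A_k}{1+\mu A_{k+1}}x^k+\frac{\mu a_{k+1}}{1+\mu A_{k+1}}y^{k+1}-\frac{a_{k+1}}{1+\mu A_{k+1}}v^{k+1}$. "Sequences evolved by Algorithm 1" means any sequences satisfying all these relations for every $k\ge 0$. *)

theory Defs
  imports "HOL-Analysis.Analysis"
begin

definition proper_fun :: "('a \<Rightarrow> ereal) \<Rightarrow> bool" where
  "proper_fun f \<longleftrightarrow> (\<forall>x. f x \<noteq> -\<infinity>) \<and> (\<exists>x. f x \<noteq> \<infinity>)"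

text \<open>closed = lower semicontinuous = closed epigraph\<close>
definition closed_fun :: "('a::topological_space \<Rightarrow> ereal) \<Rightarrow> bool" where
  "closed_fun f \<longleftrightarrow> closed {(x, r::real). f x \<le> ereal r}"

definition convex_fun :: "('a::real_vector \<Rightarrow> ereal) \<Rightarrow> bool" where
  "convex_fun f \<longleftrightarrow> (\<forall>x y t. 0 \<le> t \<and> t \<le> 1 \<longrightarrow>
     f (t *\<^sub>R x + (1 - t) *\<^sub>R y) \<le> ereal t * f x + ereal (1 - t) * f y)"

definition strongly_convex_fun :: "real \<Rightarrow> ('a::real_normed_vector \<Rightarrow> ereal) \<Rightarrow> bool" where
  "strongly_convex_fun \<mu> f \<longleftrightarrow> (\<forall>x y t. 0 \<le> t \<and> t \<le> 1 \<longrightarrow>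
     f (t *\<^sub>R x + (1 - t) *\<^sub>R y) \<le> ereal t * f x + ereal (1 - t) * f y
        - ereal (\<mu> / 2 * t * (1 - t) * (norm (x - y))\<^sup>2))"

definition eps_subdiff :: "('a::real_inner \<Rightarrow> ereal) \<Rightarrow> real \<Rightarrow> 'a \<Rightarrow> 'a set" where
  "eps_subdiff f \<epsilon> y = {u. \<forall>w. f w \<ge> f y + ereal (inner u (w - y)) - ereal \<epsilon>}"

definition subdiff :: "('a::real_inner \<Rightarrow> ereal) \<Rightarrow> 'a \<Rightarrow> 'a set" where
  "subdiff f y = eps_subdiff f 0 y"

end

theory Submission
  imports Defs
begin

text \<open>The potential
  \<open>A k * (h (y k) - h xstar) + (1 + \<mu> * A k) / 2 * (norm (xstar - x k))\<^sup>2\<close> never increases: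
  the relative error criterion makes \<open>y (Suc k)\<close> an approximate minimiser of a strongly convex
  model, and the choice of \<open>a (Suc k)\<close> as the positive root of a quadratic is exactly what turns
  the extrapolated point \<open>xt k\<close> into the right centre for the estimate-sequence argument.
  Hence the potential stays below its initial value \<open>d0\<^sup>2 / 2\<close>. Since
  \<open>a (Suc k) \<ge> \<alpha> * A (Suc k)\<close>, the weights grow like \<open>lam / (1 - \<alpha>) ^ (k - 1)\<close>, which
  gives the rate for the objective gap, and, by the quadratic growth of \<open>h\<close> around its
  minimiser, for the distances. The bounds on \<open>v\<close> and \<open>\<epsilon>\<close> then follow from the error
  criterion, since \<open>y (Suc k)\<close> and \<open>xt k\<close> are both close to \<open>xstar\<close>.\<close>

section \<open>One step of the inexact proximal scheme\<close>

lemma weighted_sum_norm_sq: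
  fixes z p q :: "'a::real_inner"
  assumes "b1 + b2 > 0"
  shows "b1 * (norm (z - p))\<^sup>2 + b2 * (norm (z - q))\<^sup>2 =
    (b1 + b2) * (norm (z - (1 / (b1 + b2)) *\<^sub>R (b1 *\<^sub>R p + b2 *\<^sub>R q)))\<^sup>2
    + b1 * b2 / (b1 + b2) * (norm (p - q))\<^sup>2"
proof -
  define c where "c = (1 / (b1 + b2)) *\<^sub>R (b1 *\<^sub>R p + b2 *\<^sub>R q)"
  have scaled: "(b1 + b2) *\<^sub>R z - b1 *\<^sub>R p - b2 *\<^sub>R q = (b1 + b2) *\<^sub>R (z - c)"
    using assms unfolding c_def by (simp add: scaleR_right_diff_distrib)
  have "(b1 + b2) * (b1 * (norm (z - p))\<^sup>2 + b2 * (norm (z - q))\<^sup>2) =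
      (norm ((b1 + b2) *\<^sub>R z - b1 *\<^sub>R p - b2 *\<^sub>R q))\<^sup>2 + b1 * b2 * (norm (p - q))\<^sup>2"
    unfolding power2_norm_eq_inner by (simp add: inner_simps inner_commute algebra_simps)
  also have "\<dots> = (b1 + b2) * ((b1 + b2) * (norm (z - c))\<^sup>2 + b1 * b2 / (b1 + b2) * (norm (p - q))\<^sup>2)"
    unfolding scaled norm_scaleR using assms by (simp add: power_mult_distrib power2_eq_square field_simps)
  finally show ?thesis
    using assms unfolding c_def by simp
qed

text \<open>The relative error criterion of an inexact proximal step with residual \<open>v\<close> and
  displacement \<open>e\<close> says that the strongly convex model below has minimum value at least
  \<open>eps\<close>: its minimum is \<open>((norm e)\<^sup>2 - (norm (l *\<^sub>R v - e))\<^sup>2 / (1 + l * mu)) / (2 * l)\<close>.\<close>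

lemma relative_error_model_lower_bound:
  fixes u e v :: "'a::real_inner"
  assumes l: "l > 0" and mu: "mu > 0" and sig: "0 \<le> sig" "sig \<le> 1"
    and err: "(norm (l *\<^sub>R v - e))\<^sup>2 / (1 + l * mu) + 2 * l * eps \<le> sig\<^sup>2 * (norm e)\<^sup>2"
  shows "eps \<le> inner v u + mu / 2 * (norm u)\<^sup>2 + 1 / (2 * l) * (norm (u - e))\<^sup>2"
proof -
  define N where "N = (norm (l *\<^sub>R v - e))\<^sup>2"
  have pos: "1 + l * mu > 0" using l mu by (simp add: add_pos_pos)
  have complete_square: "(norm (u - e))\<^sup>2 + 2 * l * inner v u
      = (norm (u - (e - l *\<^sub>R v)))\<^sup>2 + (norm e)\<^sup>2 - N"
    unfolding N_def power2_norm_eq_inner by (simp add: inner_simps inner_commute algebra_simps)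
  have "l * mu * (norm (u - 0))\<^sup>2 + 1 * (norm (u - (e - l *\<^sub>R v)))\<^sup>2 \<ge> l * mu / (l * mu + 1) * N"
    using weighted_sum_norm_sq[of "l * mu" 1 u 0 "e - l *\<^sub>R v"] pos
    unfolding N_def by (simp add: norm_minus_commute add.commute)
  moreover have "l * mu / (l * mu + 1) * N - N = - N / (1 + l * mu)"
    using pos by (simp add: field_simps)
  moreover have "sig\<^sup>2 * (norm e)\<^sup>2 \<le> (norm e)\<^sup>2"
    using sig by (simp add: mult_left_le_one_le power_le_one)
  moreover have "2 * l * (inner v u + mu / 2 * (norm u)\<^sup>2 + 1 / (2 * l) * (norm (u - e))\<^sup>2)
      = l * mu * (norm u)\<^sup>2 + ((norm (u - e))\<^sup>2 + 2 * l * inner v u)"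
    using l by (simp add: field_simps)
  ultimately have "2 * l * eps \<le> 2 * l * (inner v u + mu / 2 * (norm u)\<^sup>2 + 1 / (2 * l) * (norm (u - e))\<^sup>2)"
    using err complete_square unfolding N_def by simp
  then show ?thesis using l by simp
qed

lemma relative_error_bounds:
  fixes r e :: "'a::real_normed_vector"
  assumes l: "l > 0" and mu: "mu > 0" and sig: "sig \<ge> 0" and eps: "eps \<ge> 0"
    and err: "(norm r)\<^sup>2 / (1 + l * mu) + 2 * l * eps \<le> sig\<^sup>2 * (norm e)\<^sup>2"
  shows "norm r \<le> sig * sqrt (1 + l * mu) * norm e"
    and "2 * l * eps \<le> sig\<^sup>2 * (norm e)\<^sup>2"
proof -
  have pos: "1 + l * mu > 0" using l mu by (simp add: add_pos_pos)
  have "2 * l * eps \<ge> 0" and "(norm r)\<^sup>2 / (1 + l * mu) \<ge> 0"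
    using l eps pos by simp_all
  then show "2 * l * eps \<le> sig\<^sup>2 * (norm e)\<^sup>2"
    using err by linarith
  have "(norm r)\<^sup>2 / (1 + l * mu) \<le> sig\<^sup>2 * (norm e)\<^sup>2"
    using err \<open>2 * l * eps \<ge> 0\<close> by linarith
  then have "(norm r)\<^sup>2 \<le> sig\<^sup>2 * (norm e)\<^sup>2 * (1 + l * mu)"
    using pos by (simp add: divide_le_eq mult.commute)
  then have "sqrt ((norm r)\<^sup>2) \<le> sqrt (sig\<^sup>2 * (norm e)\<^sup>2 * (1 + l * mu))"
    by (rule real_sqrt_le_mono)
  then show "norm r \<le> sig * sqrt (1 + l * mu) * norm e"
    using sig by (simp add: real_sqrt_mult mult.commute mult.left_commute)
qed

lemma model_convex_combination:
  fixes v y yp z :: "'a::real_inner"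
  assumes A: "A \<ge> 0" and a: "a > 0"
  defines "w \<equiv> (1 / (A + a)) *\<^sub>R (A *\<^sub>R y + a *\<^sub>R z)"
  shows "A * (inner v (y - yp) + mu / 2 * (norm (y - yp))\<^sup>2)
           + a * (inner v (z - yp) + mu / 2 * (norm (z - yp))\<^sup>2)
         = (A + a) * (inner v (w - yp) + mu / 2 * (norm (w - yp))\<^sup>2)
           + mu * A * a / (A + a) * (norm (z - y))\<^sup>2 / 2"
proof -
  have pos: "A + a > 0" using A a by simp
  have "(A + a) *\<^sub>R (w - yp) = A *\<^sub>R y + a *\<^sub>R z - (A + a) *\<^sub>R yp"
    using pos unfolding w_def by (simp add: scaleR_right_diff_distrib)
  then have "(A + a) * inner v (w - yp) = inner v (A *\<^sub>R y + a *\<^sub>R z - (A + a) *\<^sub>R yp)"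
    by (metis inner_scaleR_right)
  then have linear: "A * inner v (y - yp) + a * inner v (z - yp) = (A + a) * inner v (w - yp)"
    by (simp add: inner_simps algebra_simps)
  have quadratic: "A * (norm (y - yp))\<^sup>2 + a * (norm (z - yp))\<^sup>2
      = (A + a) * (norm (w - yp))\<^sup>2 + A * a / (A + a) * (norm (z - y))\<^sup>2"
    using weighted_sum_norm_sq[of A a yp y z] pos unfolding w_def
    by (simp add: norm_minus_commute)
  have "A * (inner v (y - yp) + mu / 2 * (norm (y - yp))\<^sup>2)
          + a * (inner v (z - yp) + mu / 2 * (norm (z - yp))\<^sup>2)
        = (A * inner v (y - yp) + a * inner v (z - yp))
          + mu / 2 * (A * (norm (y - yp))\<^sup>2 + a * (norm (z - yp))\<^sup>2)"
    by (simp add: algebra_simps)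
  also have "\<dots> = (A + a) * inner v (w - yp)
      + mu / 2 * ((A + a) * (norm (w - yp))\<^sup>2 + A * a / (A + a) * (norm (z - y))\<^sup>2)"
    unfolding linear quadratic ..
  finally show ?thesis by (simp add: algebra_simps)
qed

text \<open>For the weights \<open>b1 = mu * A * a / (A + a)\<close> and \<open>b2 = 1 + mu * A\<close>, the defining
  identity of \<open>a\<close> gives \<open>b1 + b2 = a\<^sup>2 / (l * (A + a))\<close> and \<open>w - xt = (a / (A + a)) *\<^sub>R (z - c)\<close>,
  where \<open>c\<close> is the \<open>b\<close>-weighted mean of \<open>y\<close> and \<open>x\<close>; so the claim is an instance of
  \<open>weighted_sum_norm_sq\<close>.\<close>

lemma extrapolation_dist_le:
  fixes x y z :: "'a::real_inner"
  assumes mu: "mu > 0" and l: "l > 0" and A: "A \<ge> 0" and a: "a > 0"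
    and rel: "a\<^sup>2 = l * ((1 + mu * A) * (A + a) + mu * A * a)"
  defines "w \<equiv> (1 / (A + a)) *\<^sub>R (A *\<^sub>R y + a *\<^sub>R z)"
    and "xt \<equiv> ((a - mu * A * l) / (A + a)) *\<^sub>R x + ((A + mu * A * l) / (A + a)) *\<^sub>R y"
  shows "(A + a) / l * (norm (w - xt))\<^sup>2
           \<le> mu * A * a / (A + a) * (norm (z - y))\<^sup>2 + (1 + mu * A) * (norm (z - x))\<^sup>2"
proof -
  define A' where "A' = A + a"
  have A'p: "A' > 0" using A a unfolding A'_def by simp
  define b1 where "b1 = mu * A * a / A'"
  define b2 where "b2 = 1 + mu * A"
  have b1: "b1 \<ge> 0" unfolding b1_def using mu A a A'p by simp
  have b2: "b2 > 0" unfolding b2_def using mu A by (simp add: add_pos_nonneg)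
  have bs: "b1 + b2 = a\<^sup>2 / (l * A')"
  proof -
    have "b1 + b2 = (mu * A * a + (1 + mu * A) * A') / A'"
      using A'p unfolding b1_def b2_def by (simp add: field_simps)
    moreover have "mu * A * a + (1 + mu * A) * A' = a\<^sup>2 / l"
      using rel l unfolding A'_def by (simp add: field_simps)
    ultimately show ?thesis by simp
  qed
  define c where "c = (1 / (b1 + b2)) *\<^sub>R (b1 *\<^sub>R y + b2 *\<^sub>R x)"
  define c1 where "c1 = (a - mu * A * l) / A'"
  have c1_weight: "b2 / (b1 + b2) = c1 * A' / a"
  proof -
    have e1: "b2 / (b1 + b2) = b2 * l * A' / a\<^sup>2"
      unfolding bs using a l A'p by (simp add: field_simps)
    have e2: "c1 * A' / a = (a - mu * A * l) / a"
      unfolding c1_def using A'p by simp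
    have e3: "b2 * l * A' = a\<^sup>2 - mu * A * l * a"
      unfolding rel b2_def A'_def by (simp add: algebra_simps)
    show ?thesis unfolding e1 e2 e3 using a by (simp add: field_simps power2_eq_square)
  qed
  have c_eq: "c = (1 - c1 * A' / a) *\<^sub>R y + (c1 * A' / a) *\<^sub>R x"
  proof -
    have "b1 / (b1 + b2) = 1 - b2 / (b1 + b2)" using b1 b2 by (simp add: field_simps)
    then show ?thesis
      unfolding c_def c1_weight[symmetric] by (simp add: scaleR_right_distrib)
  qed
  have xt_eq: "xt = c1 *\<^sub>R x + (1 - c1) *\<^sub>R y"
    unfolding xt_def c1_def using A'p unfolding A'_def by (simp add: field_simps)
  have w_xt: "w - xt = (a / A') *\<^sub>R (z - c)"
  proof -
    have "(A / A') *\<^sub>R y + (a / A') *\<^sub>R y = y"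
      using A'p unfolding A'_def by (simp add: scaleR_left_distrib[symmetric] add_divide_distrib[symmetric])
    then have "w - xt = (a / A') *\<^sub>R z - (a / A' - c1) *\<^sub>R y - c1 *\<^sub>R x"
      unfolding w_def xt_eq A'_def[symmetric] using A'p by (simp add: algebra_simps)
    also have "\<dots> = (a / A') *\<^sub>R (z - c)"
      unfolding c_eq using a A'p by (simp add: algebra_simps)
    finally show ?thesis .
  qed
  have "A' / l * (norm (w - xt))\<^sup>2 = (b1 + b2) * (norm (z - c))\<^sup>2"
    unfolding w_xt bs norm_scaleR using a A'p l by (simp add: power_mult_distrib field_simps power2_eq_square)
  also have "\<dots> \<le> b1 * (norm (z - y))\<^sup>2 + b2 * (norm (z - x))\<^sup>2"
    using weighted_sum_norm_sq[of b1 b2 z y x] b1 b2 unfolding c_def by simp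
  finally show ?thesis unfolding A'_def b1_def b2_def by simp
qed

lemma hpe_step_lower_bound:
  fixes x y yp v z xt :: "'a::real_inner"
  assumes mu: "mu > 0" and l: "l > 0" and A: "A \<ge> 0" and a: "a > 0"
    and rel: "a\<^sup>2 = l * ((1 + mu * A) * (A + a) + mu * A * a)"
    and sig: "0 \<le> sig" "sig \<le> 1"
    and xt: "xt = ((a - mu * A * l) / (A + a)) *\<^sub>R x + ((A + mu * A * l) / (A + a)) *\<^sub>R y"
    and err: "(norm (l *\<^sub>R v + yp - xt))\<^sup>2 / (1 + l * mu) + 2 * l * eps \<le> sig\<^sup>2 * (norm (yp - xt))\<^sup>2"
  shows "(A + a) * eps \<le> A * (inner v (y - yp) + mu / 2 * (norm (y - yp))\<^sup>2)
           + a * (inner v (z - yp) + mu / 2 * (norm (z - yp))\<^sup>2) + (1 + mu * A) / 2 * (norm (z - x))\<^sup>2"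
proof -
  define w where "w = (1 / (A + a)) *\<^sub>R (A *\<^sub>R y + a *\<^sub>R z)"
  have extrapolation: "(A + a) / l * (norm (w - xt))\<^sup>2
      \<le> mu * A * a / (A + a) * (norm (z - y))\<^sup>2 + (1 + mu * A) * (norm (z - x))\<^sup>2"
    using extrapolation_dist_le[OF mu l A a rel, of y z x] unfolding w_def xt .
  have "eps \<le> inner v (w - yp) + mu / 2 * (norm (w - yp))\<^sup>2 + 1 / (2 * l) * (norm ((w - yp) - (xt - yp)))\<^sup>2"
  proof (rule relative_error_model_lower_bound[OF l mu sig])
    have "l *\<^sub>R v - (xt - yp) = l *\<^sub>R v + yp - xt" by (simp add: algebra_simps)
    then show "(norm (l *\<^sub>R v - (xt - yp)))\<^sup>2 / (1 + l * mu) + 2 * l * eps \<le> sig\<^sup>2 * (norm (xt - yp))\<^sup>2"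
      using err by (simp only: norm_minus_commute[of xt yp])
  qed
  then have "eps \<le> inner v (w - yp) + mu / 2 * (norm (w - yp))\<^sup>2 + 1 / (2 * l) * (norm (w - xt))\<^sup>2"
    by simp
  then have "(A + a) * eps
      \<le> (A + a) * (inner v (w - yp) + mu / 2 * (norm (w - yp))\<^sup>2 + 1 / (2 * l) * (norm (w - xt))\<^sup>2)"
    using A a by (intro mult_left_mono) auto
  also have "\<dots> = (A + a) * (inner v (w - yp) + mu / 2 * (norm (w - yp))\<^sup>2)
      + (A + a) / l * (norm (w - xt))\<^sup>2 / 2"
    using l by (simp add: field_simps)
  also have "\<dots> \<le> (A + a) * (inner v (w - yp) + mu / 2 * (norm (w - yp))\<^sup>2)
      + (mu * A * a / (A + a) * (norm (z - y))\<^sup>2 + (1 + mu * A) * (norm (z - x))\<^sup>2) / 2"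
    using divide_right_mono[OF extrapolation, of 2] by simp
  also have "\<dots> = A * (inner v (y - yp) + mu / 2 * (norm (y - yp))\<^sup>2)
      + a * (inner v (z - yp) + mu / 2 * (norm (z - yp))\<^sup>2) + (1 + mu * A) / 2 * (norm (z - x))\<^sup>2"
    using model_convex_combination[OF A a, where v = v and y = y and yp = yp and z = z and mu = mu]
    unfolding w_def by (simp add: add_divide_distrib)
  finally show ?thesis .
qed

text \<open>Completing the square around \<open>yp - (1 / mu) *\<^sub>R v\<close> shows that the update of \<open>x\<close> is the
  minimiser of the left-hand side, which is a quadratic in \<open>z\<close> with leading coefficient
  \<open>(1 + mu * (A + a)) / 2\<close>.\<close>

lemma model_complete_square:
  fixes x yp v z xp :: "'a::real_inner"
  assumes mu: "mu > 0" and A: "A \<ge> 0" and a: "a > 0"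
    and xp: "xp = ((1 + mu * A) / (1 + mu * (A + a))) *\<^sub>R x + (mu * a / (1 + mu * (A + a))) *\<^sub>R yp
                  - (a / (1 + mu * (A + a))) *\<^sub>R v"
  shows "a * (inner v (z - yp) + mu / 2 * (norm (z - yp))\<^sup>2) + (1 + mu * A) / 2 * (norm (z - x))\<^sup>2
       = - a * (norm v)\<^sup>2 / (2 * mu)
         + a * mu * (1 + mu * A) / (1 + mu * (A + a)) / 2 * (norm (yp - (1 / mu) *\<^sub>R v - x))\<^sup>2
         + (1 + mu * (A + a)) / 2 * (norm (z - xp))\<^sup>2"
proof -
  define q where "q = yp - (1 / mu) *\<^sub>R v"
  define S where "S = 1 + mu * (A + a)"
  have S: "S > 0" unfolding S_def using mu A a by (simp add: add_pos_nonneg)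
  have model: "inner v (z - yp) + mu / 2 * (norm (z - yp))\<^sup>2 = mu / 2 * (norm (z - q))\<^sup>2 - (norm v)\<^sup>2 / (2 * mu)"
    unfolding q_def power2_norm_eq_inner using mu
    by (simp add: inner_simps inner_commute algebra_simps power2_eq_square field_simps)
  have mean: "(1 / (a * mu + (1 + mu * A))) *\<^sub>R ((a * mu) *\<^sub>R q + (1 + mu * A) *\<^sub>R x) = xp"
    unfolding xp q_def using mu S unfolding S_def
    by (simp add: algebra_simps scaleR_right_diff_distrib divide_inverse)
  have split: "(a * mu) * (norm (z - q))\<^sup>2 + (1 + mu * A) * (norm (z - x))\<^sup>2
      = S * (norm (z - xp))\<^sup>2 + a * mu * (1 + mu * A) / S * (norm (q - x))\<^sup>2"
    using weighted_sum_norm_sq[of "a * mu" "1 + mu * A" z q x] S unfolding mean S_def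
    by (simp add: algebra_simps)
  have "a * (inner v (z - yp) + mu / 2 * (norm (z - yp))\<^sup>2) + (1 + mu * A) / 2 * (norm (z - x))\<^sup>2
      = ((a * mu) * (norm (z - q))\<^sup>2 + (1 + mu * A) * (norm (z - x))\<^sup>2) / 2 - a * (norm v)\<^sup>2 / (2 * mu)"
    unfolding model by (simp add: algebra_simps)
  also have "\<dots> = (S * (norm (z - xp))\<^sup>2 + a * mu * (1 + mu * A) / S * (norm (q - x))\<^sup>2) / 2
      - a * (norm v)\<^sup>2 / (2 * mu)"
    unfolding split ..
  finally show ?thesis
    unfolding q_def[symmetric] S_def[symmetric] using S mu by (simp add: field_simps)
qed

lemma hpe_step_inequality:
  fixes xs x y yp v xt xp :: "'a::real_inner"
  assumes mu: "mu > 0" and l: "l > 0" and A: "A \<ge> 0" and a: "a > 0"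
    and rel: "a\<^sup>2 = l * ((1 + mu * A) * (A + a) + mu * A * a)"
    and sig: "0 \<le> sig" "sig \<le> 1"
    and xt: "xt = ((a - mu * A * l) / (A + a)) *\<^sub>R x + ((A + mu * A * l) / (A + a)) *\<^sub>R y"
    and err: "(norm (l *\<^sub>R v + yp - xt))\<^sup>2 / (1 + l * mu) + 2 * l * eps \<le> sig\<^sup>2 * (norm (yp - xt))\<^sup>2"
    and xp: "xp = ((1 + mu * A) / (1 + mu * (A + a))) *\<^sub>R x + (mu * a / (1 + mu * (A + a))) *\<^sub>R yp
                  - (a / (1 + mu * (A + a))) *\<^sub>R v"
  shows "(1 + mu * (A + a)) / 2 * (norm (xs - xp))\<^sup>2 + (A + a) * eps
     \<le> A * (inner v (y - yp) + mu / 2 * (norm (y - yp))\<^sup>2)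
       + a * (inner v (xs - yp) + mu / 2 * (norm (xs - yp))\<^sup>2) + (1 + mu * A) / 2 * (norm (xs - x))\<^sup>2"
  using hpe_step_lower_bound[OF mu l A a rel sig xt err, of xp]
    model_complete_square[OF mu A a xp, of xs] model_complete_square[OF mu A a xp, of xp]
  by simp

section \<open>Subgradient inequalities for extended-real functions\<close>

lemma le_of_le_add_scaled:
  fixes c d e :: real
  assumes le: "\<And>t. 0 < t \<Longrightarrow> t \<le> 1 \<Longrightarrow> c \<le> d + t * e"
  shows "c \<le> d"
proof (rule field_le_epsilon)
  fix r :: real assume r: "r > 0"
  define t where "t = min 1 (r / (\<bar>e\<bar> + 1))"
  have t: "0 < t" "t \<le> 1" unfolding t_def using r by auto
  have "t * e \<le> t * \<bar>e\<bar>"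
    using t by (intro mult_left_mono) auto
  also have "\<dots> \<le> r / (\<bar>e\<bar> + 1) * \<bar>e\<bar>"
    unfolding t_def by (intro mult_right_mono) auto
  also have "\<dots> \<le> r"
    using r by (simp add: field_simps)
  finally show "c \<le> d + r" using le[OF t] by linarith
qed

lemma proper_fun_finite:
  assumes "proper_fun f" "f z \<noteq> \<infinity>"
  shows "f z = ereal (real_of_ereal (f z))"
  using assms unfolding proper_fun_def by (cases "f z") auto

lemma eps_subdiff_not_infty:
  assumes "proper_fun f" "u \<in> eps_subdiff f e y"
  shows "f y \<noteq> \<infinity>"
proof -
  obtain w where w: "f w \<noteq> \<infinity>" using assms(1) unfolding proper_fun_def by auto
  have "f w \<ge> f y + ereal (inner u (w - y)) - ereal e"
    using assms(2) unfolding eps_subdiff_def by auto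
  then show ?thesis using w by auto
qed

lemma eps_subdiff_real_ineq:
  assumes "u \<in> eps_subdiff f e y" "f y = ereal fy" "f z = ereal fz"
  shows "fy + inner u (z - y) - e \<le> fz"
proof -
  have "f z \<ge> f y + ereal (inner u (z - y)) - ereal e"
    using assms(1) unfolding eps_subdiff_def by auto
  then show ?thesis using assms(2,3) by simp
qed

text \<open>Both lemmas below compare the function along the segment from \<open>y\<close> to \<open>z\<close> and let the
  step length tend to \<open>0\<close>.\<close>

lemma strongly_convex_subdiff_ineq:
  fixes g :: "'a::real_inner \<Rightarrow> ereal"
  assumes sc: "strongly_convex_fun mu g" and w: "w \<in> subdiff g y"
    and gy: "g y = ereal gy" and gz: "g z = ereal gz"
  shows "gy + inner w (z - y) + mu / 2 * (norm (z - y))\<^sup>2 \<le> gz"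
proof (rule le_of_le_add_scaled)
  fix t :: real assume t0: "0 < t" and t1: "t \<le> 1"
  define p where "p = t *\<^sub>R z + (1 - t) *\<^sub>R y"
  define N where "N = (norm (z - y))\<^sup>2"
  have "g p \<le> ereal t * g z + ereal (1 - t) * g y - ereal (mu / 2 * t * (1 - t) * N)"
    using sc t0 t1 unfolding strongly_convex_fun_def p_def N_def by auto
  then have up: "g p \<le> ereal (t * gz + (1 - t) * gy - mu / 2 * t * (1 - t) * N)"
    using gy gz by simp
  have "g p \<ge> g y + ereal (inner w (p - y)) - ereal 0"
    using w unfolding subdiff_def eps_subdiff_def by auto
  moreover have "p - y = t *\<^sub>R (z - y)" unfolding p_def by (simp add: algebra_simps)
  ultimately have lo: "g p \<ge> ereal (gy + t * inner w (z - y))" using gy by simp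
  from order_trans[OF lo up]
  have "t * (gy + inner w (z - y) + mu / 2 * N) \<le> t * (gz + t * (mu / 2 * N))"
    by (simp add: algebra_simps add_divide_distrib diff_divide_distrib)
  then show "gy + inner w (z - y) + mu / 2 * (norm (z - y))\<^sup>2 \<le> gz + t * (mu / 2 * (norm (z - y))\<^sup>2)"
    using t0 unfolding N_def by simp
qed

lemma strongly_convex_quadratic_growth:
  fixes f g :: "'a::real_inner \<Rightarrow> ereal"
  assumes fc: "convex_fun f" and sc: "strongly_convex_fun mu g"
    and min: "\<And>z. f xs + g xs \<le> f z + g z"
    and fs: "f xs = ereal fs" and gs: "g xs = ereal gs"
    and fy: "f y = ereal fy" and gy: "g y = ereal gy"
  shows "mu / 2 * (norm (y - xs))\<^sup>2 \<le> (fy + gy) - (fs + gs)"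
proof (rule le_of_le_add_scaled)
  fix t :: real assume t0: "0 < t" and t1: "t \<le> 1"
  define p where "p = t *\<^sub>R y + (1 - t) *\<^sub>R xs"
  define N where "N = (norm (y - xs))\<^sup>2"
  have "f p \<le> ereal t * f y + ereal (1 - t) * f xs"
    using fc t0 t1 unfolding convex_fun_def p_def by auto
  then have up_f: "f p \<le> ereal (t * fy + (1 - t) * fs)" using fy fs by simp
  have "g p \<le> ereal t * g y + ereal (1 - t) * g xs - ereal (mu / 2 * t * (1 - t) * N)"
    using sc t0 t1 unfolding strongly_convex_fun_def p_def N_def by auto
  then have up_g: "g p \<le> ereal (t * gy + (1 - t) * gs - mu / 2 * t * (1 - t) * N)"
    using gy gs by simp
  have "ereal (fs + gs) \<le> f p + g p" using min fs gs by (metis plus_ereal.simps(1))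
  also have "\<dots> \<le> ereal (t * fy + (1 - t) * fs + (t * gy + (1 - t) * gs - mu / 2 * t * (1 - t) * N))"
    using add_mono[OF up_f up_g] by simp
  finally have "t * (mu / 2 * N) \<le> t * ((fy + gy) - (fs + gs) + t * (mu / 2 * N))"
    by (simp add: algebra_simps add_divide_distrib diff_divide_distrib)
  then show "mu / 2 * (norm (y - xs))\<^sup>2 \<le> (fy + gy) - (fs + gs) + t * (mu / 2 * (norm (y - xs))\<^sup>2)"
    using t0 unfolding N_def by simp
qed

lemma powr_half_eq_sqrt_power:
  assumes "0 < r" "k \<ge> 1"
  shows "r powr ((real k - 1) / 2) = sqrt (r ^ (k - 1))"
proof -
  have "(real k - 1) / 2 = real (k - 1) * (1 / 2)" using assms(2) by (simp add: of_nat_diff)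
  then have "r powr ((real k - 1) / 2) = (r powr real (k - 1)) powr (1 / 2)"
    by (simp add: powr_powr)
  also have "\<dots> = sqrt (r ^ (k - 1))"
    using assms(1) by (simp add: powr_realpow powr_half_sqrt)
  finally show ?thesis .
qed

lemma powr_three_halves: "lam > 0 \<Longrightarrow> lam powr (3 / 2) = lam * sqrt (lam :: real)"
  using powr_add[of lam 1 "1 / 2"] by (simp add: powr_half_sqrt)

lemma relative_error_factor_antimono:
  fixes l lam mu sig :: real
  assumes "lam > 0" "l \<ge> lam" "mu > 0" "sig \<ge> 0"
  shows "(1 + sig * sqrt (1 + l * mu)) / l \<le> (1 + sig * sqrt (1 + lam * mu)) / lam"
proof -
  have sqrt_div: "sqrt (1 + t * mu) / t = sqrt (1 / t\<^sup>2 + mu / t)" if t: "t > 0" for t :: real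
  proof -
    have "1 / t\<^sup>2 + mu / t = (1 + t * mu) / t\<^sup>2" using t by (simp add: field_simps power2_eq_square)
    then show ?thesis using t by (simp add: real_sqrt_divide)
  qed
  have inv: "1 / l \<le> 1 / lam" using assms by (intro divide_left_mono) auto
  have "1 / l\<^sup>2 \<le> 1 / lam\<^sup>2" using assms by (intro divide_left_mono power_mono mult_pos_pos) auto
  moreover have "mu / l \<le> mu / lam" using assms by (intro divide_left_mono) auto
  ultimately have "sqrt (1 + l * mu) / l \<le> sqrt (1 + lam * mu) / lam"
    using sqrt_div[of l] sqrt_div[of lam] assms by simp
  then have "1 / l + sig * (sqrt (1 + l * mu) / l) \<le> 1 / lam + sig * (sqrt (1 + lam * mu) / lam)"
    using inv assms(4) by (intro add_mono mult_left_mono) auto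
  then show ?thesis by (simp add: add_divide_distrib)
qed

lemma positive_root_ge:
  fixes B C :: real
  assumes "B \<ge> 0" "C \<ge> 0"
  shows "B \<le> (B + sqrt (B\<^sup>2 + 4 * C)) / 2"
proof -
  have "B = sqrt (B\<^sup>2)" using assms(1) by simp
  also have "\<dots> \<le> sqrt (B\<^sup>2 + 4 * C)" using assms(2) by (intro real_sqrt_le_mono) simp
  finally show ?thesis by simp
qed

lemma positive_root_eq:
  fixes B C :: real
  assumes "C \<ge> 0"
  shows "((B + sqrt (B\<^sup>2 + 4 * C)) / 2)\<^sup>2 = B * ((B + sqrt (B\<^sup>2 + 4 * C)) / 2) + C"
proof -
  have "(sqrt (B\<^sup>2 + 4 * C))\<^sup>2 = B\<^sup>2 + 4 * C" using assms by simp
  then show ?thesis by (simp add: power2_eq_square field_simps)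
qed

section \<open>The accelerated method\<close>

locale accelerated_hpe =
  fixes f g :: "'a::real_inner \<Rightarrow> ereal"
    and \<mu> \<sigma> :: real and xstar :: 'a
    and lambda a A \<epsilon> :: "nat \<Rightarrow> real"
    and x y v xt :: "nat \<Rightarrow> 'a"
  assumes f_proper: "proper_fun f" and f_convex: "convex_fun f"
    and g_proper: "proper_fun g"
    and mu_pos: "\<mu> > 0" and g_strongly_convex: "strongly_convex_fun \<mu> g"
    and dom: "\<exists>z. f z + g z \<noteq> \<infinity>"
    and xstar_min: "\<And>z. f xstar + g xstar \<le> f z + g z"
    and sigma_nonneg: "0 \<le> \<sigma>" and sigma_le_1: "\<sigma> \<le> 1"
    and A_0: "A 0 = 0"
    and lambda_pos: "\<And>k. lambda (Suc k) > 0"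
    and a_Suc: "\<And>k. a (Suc k) =
        ((1 + 2 * \<mu> * A k) * lambda (Suc k)
          + sqrt (((1 + 2 * \<mu> * A k))\<^sup>2 * (lambda (Suc k))\<^sup>2
                  + 4 * (1 + \<mu> * A k) * A k * lambda (Suc k))) / 2"
    and xt_eq: "\<And>k. xt k =
        ((a (Suc k) - \<mu> * A k * lambda (Suc k)) / (A k + a (Suc k))) *\<^sub>R x k
        + ((A k + \<mu> * A k * lambda (Suc k)) / (A k + a (Suc k))) *\<^sub>R y k"
    and eps_nonneg: "\<And>k. \<epsilon> (Suc k) \<ge> 0"
    and inclusion: "\<And>k. \<exists>u w. u \<in> eps_subdiff f (\<epsilon> (Suc k)) (y (Suc k))
                        \<and> w \<in> subdiff g (y (Suc k)) \<and> v (Suc k) = u + w"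
    and error_criterion: "\<And>k. (norm (lambda (Suc k) *\<^sub>R v (Suc k) + y (Suc k) - xt k))\<^sup>2
                    / (1 + lambda (Suc k) * \<mu>)
                  + 2 * lambda (Suc k) * \<epsilon> (Suc k)
                \<le> \<sigma>\<^sup>2 * (norm (y (Suc k) - xt k))\<^sup>2"
    and A_Suc: "\<And>k. A (Suc k) = A k + a (Suc k)"
    and x_Suc: "\<And>k. x (Suc k) =
        ((1 + \<mu> * A k) / (1 + \<mu> * A (Suc k))) *\<^sub>R x k
        + (\<mu> * a (Suc k) / (1 + \<mu> * A (Suc k))) *\<^sub>R y (Suc k)
        - (a (Suc k) / (1 + \<mu> * A (Suc k))) *\<^sub>R v (Suc k)"
begin

definition h :: "'a \<Rightarrow> real" where
  "h z = real_of_ereal (f z) + real_of_ereal (g z)"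

definition d0 :: real where
  "d0 = norm (xstar - x 0)"

definition potential :: "nat \<Rightarrow> real" where
  "potential k = A k * (h (y k) - h xstar) + (1 + \<mu> * A k) / 2 * (norm (xstar - x k))\<^sup>2"

lemma finite_at_xstar: "f xstar \<noteq> \<infinity>" "g xstar \<noteq> \<infinity>"
proof -
  obtain z where "f z + g z \<noteq> \<infinity>" using dom by auto
  then have "f xstar + g xstar \<noteq> \<infinity>" using xstar_min[of z] by auto
  then show "f xstar \<noteq> \<infinity>" "g xstar \<noteq> \<infinity>"
    using f_proper g_proper unfolding proper_fun_def by auto
qed

lemma finite_at_iterate: "f (y (Suc k)) \<noteq> \<infinity>" "g (y (Suc k)) \<noteq> \<infinity>"
proof -
  obtain u w where "u \<in> eps_subdiff f (\<epsilon> (Suc k)) (y (Suc k))" "w \<in> eps_subdiff g 0 (y (Suc k))"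
    using inclusion[of k] unfolding subdiff_def by blast
  then show "f (y (Suc k)) \<noteq> \<infinity>" "g (y (Suc k)) \<noteq> \<infinity>"
    using eps_subdiff_not_infty f_proper g_proper by blast+
qed

lemma h_gap:
  assumes "f z \<noteq> \<infinity>" "g z \<noteq> \<infinity>"
  shows "(f z + g z) - (f xstar + g xstar) = ereal (h z - h xstar)"
  using proper_fun_finite[OF f_proper assms(1)] proper_fun_finite[OF g_proper assms(2)]
    proper_fun_finite[OF f_proper finite_at_xstar(1)] proper_fun_finite[OF g_proper finite_at_xstar(2)]
  unfolding h_def by (metis ereal_minus(1) plus_ereal.simps(1))

lemma subgradient_inequality:
  assumes "f z \<noteq> \<infinity>" "g z \<noteq> \<infinity>"
  shows "h (y (Suc k)) + inner (v (Suc k)) (z - y (Suc k)) - \<epsilon> (Suc k)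
           + \<mu> / 2 * (norm (z - y (Suc k)))\<^sup>2 \<le> h z"
proof -
  obtain u w where u: "u \<in> eps_subdiff f (\<epsilon> (Suc k)) (y (Suc k))"
      and w: "w \<in> subdiff g (y (Suc k))" and v: "v (Suc k) = u + w"
    using inclusion by blast
  have "real_of_ereal (f (y (Suc k))) + inner u (z - y (Suc k)) - \<epsilon> (Suc k) \<le> real_of_ereal (f z)"
    using eps_subdiff_real_ineq[OF u] proper_fun_finite[OF f_proper] finite_at_iterate assms by blast
  moreover have "real_of_ereal (g (y (Suc k))) + inner w (z - y (Suc k)) + \<mu> / 2 * (norm (z - y (Suc k)))\<^sup>2
      \<le> real_of_ereal (g z)"
    using strongly_convex_subdiff_ineq[OF g_strongly_convex w] proper_fun_finite[OF g_proper]
      finite_at_iterate assms by blast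
  ultimately show ?thesis unfolding h_def v inner_add_left by linarith
qed

lemma quadratic_growth:
  assumes "f z \<noteq> \<infinity>" "g z \<noteq> \<infinity>"
  shows "\<mu> / 2 * (norm (z - xstar))\<^sup>2 \<le> h z - h xstar"
  using strongly_convex_quadratic_growth[OF f_convex g_strongly_convex xstar_min]
    proper_fun_finite[OF f_proper] proper_fun_finite[OF g_proper] finite_at_xstar assms
  unfolding h_def by simp

lemma a_Suc_root:
  "a (Suc k) = ((1 + 2 * \<mu> * A k) * lambda (Suc k)
     + sqrt (((1 + 2 * \<mu> * A k) * lambda (Suc k))\<^sup>2 + 4 * ((1 + \<mu> * A k) * A k * lambda (Suc k)))) / 2"
  unfolding a_Suc by (simp only: power_mult_distrib mult.assoc)

lemma a_Suc_ge: "A k \<ge> 0 \<Longrightarrow> a (Suc k) \<ge> (1 + 2 * \<mu> * A k) * lambda (Suc k)"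
  unfolding a_Suc_root by (rule positive_root_ge) (use mu_pos lambda_pos[of k] in simp)+

lemma A_nonneg: "A k \<ge> 0"
proof (induction k)
  case 0 then show ?case using A_0 by simp
next
  case (Suc k)
  have "(1 + 2 * \<mu> * A k) * lambda (Suc k) \<ge> 0"
    using Suc mu_pos lambda_pos[of k] by simp
  then show ?case using a_Suc_ge[OF Suc] A_Suc[of k] Suc by linarith
qed

lemma a_pos: "a (Suc k) > 0"
proof -
  have "(1 + 2 * \<mu> * A k) * lambda (Suc k) > 0"
    using A_nonneg[of k] mu_pos lambda_pos[of k] by (simp add: add_pos_nonneg)
  then show ?thesis using a_Suc_ge[OF A_nonneg] by (meson less_le_trans)
qed

lemma a_Suc_sq:
  "(a (Suc k))\<^sup>2 = lambda (Suc k) * ((1 + \<mu> * A k) * (A k + a (Suc k)) + \<mu> * A k * a (Suc k))"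
proof -
  have "(a (Suc k))\<^sup>2 = (1 + 2 * \<mu> * A k) * lambda (Suc k) * a (Suc k) + (1 + \<mu> * A k) * A k * lambda (Suc k)"
    unfolding a_Suc_root
    by (rule positive_root_eq) (use A_nonneg[of k] mu_pos lambda_pos[of k] in simp)
  then show ?thesis by (simp add: algebra_simps)
qed

text \<open>The potential is a Lyapunov function: the step inequality bounds its increment by
  the linearisations of \<open>h\<close> at \<open>y (Suc k)\<close>, evaluated at \<open>y k\<close> and at \<open>xstar\<close>.\<close>

lemma potential_Suc_le: "potential (Suc k) \<le> potential k"
proof -
  define yp where "yp = y (Suc k)"
  define vp where "vp = v (Suc k)"
  define ep where "ep = \<epsilon> (Suc k)"
  define l where "l = lambda (Suc k)"
  define a' where "a' = a (Suc k)"
  define A' where "A' = A k"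
  define model where "model z = inner vp (z - yp) + \<mu> / 2 * (norm (z - yp))\<^sup>2" for z
  have step: "(1 + \<mu> * (A' + a')) / 2 * (norm (xstar - x (Suc k)))\<^sup>2 + (A' + a') * ep
      \<le> A' * model (y k) + a' * model xstar + (1 + \<mu> * A') / 2 * (norm (xstar - x k))\<^sup>2"
    unfolding model_def
  proof (rule hpe_step_inequality[OF mu_pos _ _ _ _ sigma_nonneg sigma_le_1])
    show "l > 0" "A' \<ge> 0" "a' > 0"
      unfolding l_def A'_def a'_def using lambda_pos A_nonneg a_pos by auto
    show "a'\<^sup>2 = l * ((1 + \<mu> * A') * (A' + a') + \<mu> * A' * a')"
      unfolding l_def A'_def a'_def by (rule a_Suc_sq)
    show "xt k = ((a' - \<mu> * A' * l) / (A' + a')) *\<^sub>R x k + ((A' + \<mu> * A' * l) / (A' + a')) *\<^sub>R y k"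
      unfolding l_def A'_def a'_def by (rule xt_eq)
    show "(norm (l *\<^sub>R vp + yp - xt k))\<^sup>2 / (1 + l * \<mu>) + 2 * l * ep \<le> \<sigma>\<^sup>2 * (norm (yp - xt k))\<^sup>2"
      unfolding l_def vp_def yp_def ep_def by (rule error_criterion)
    show "x (Suc k) = ((1 + \<mu> * A') / (1 + \<mu> * (A' + a'))) *\<^sub>R x k
        + (\<mu> * a' / (1 + \<mu> * (A' + a'))) *\<^sub>R yp - (a' / (1 + \<mu> * (A' + a'))) *\<^sub>R vp"
      unfolding A'_def a'_def yp_def vp_def using x_Suc A_Suc by simp
  qed
  have at_xstar: "a' * (h yp + model xstar - ep) \<le> a' * h xstar"
    using subgradient_inequality[OF finite_at_xstar, of k] a_pos[of k]
    unfolding model_def yp_def vp_def ep_def a'_def by (intro mult_left_mono) (auto simp: algebra_simps)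
  have at_y: "A' * (h yp + model (y k) - ep) \<le> A' * h (y k)"
  proof (cases k)
    case 0 then show ?thesis unfolding A'_def using A_0 by simp
  next
    case (Suc j)
    then show ?thesis
      using subgradient_inequality[OF finite_at_iterate[of j], where k = k] A_nonneg[of k]
      unfolding model_def yp_def vp_def ep_def A'_def by (intro mult_left_mono) (auto simp: algebra_simps)
  qed
  have "potential (Suc k) = (A' + a') * (h yp - h xstar) + (1 + \<mu> * (A' + a')) / 2 * (norm (xstar - x (Suc k)))\<^sup>2"
    unfolding potential_def A'_def a'_def yp_def using A_Suc by simp
  also have "\<dots> \<le> A' * (h (y k) - h xstar) + (1 + \<mu> * A') / 2 * (norm (xstar - x k))\<^sup>2"
    using step at_xstar at_y by (simp add: algebra_simps)
  also have "\<dots> = potential k"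
    unfolding potential_def A'_def ..
  finally show ?thesis .
qed

lemma potential_le: "potential k \<le> d0\<^sup>2 / 2"
proof (induction k)
  case 0 then show ?case unfolding potential_def d0_def using A_0 by simp
next
  case (Suc k) then show ?case using potential_Suc_le[of k] by linarith
qed

end

locale accelerated_hpe_bounded_steps = accelerated_hpe +
  fixes lam :: real
  assumes lam_pos: "lam > 0" and lambda_ge: "\<And>k. k \<ge> 1 \<Longrightarrow> lam \<le> lambda k"
begin

definition \<alpha> :: real where
  "\<alpha> = sqrt (\<mu> * lam / (1 + \<mu> * lam))"

lemma alpha_nonneg: "0 \<le> \<alpha>"
  unfolding \<alpha>_def using mu_pos lam_pos by simp

lemma alpha_less_1: "\<alpha> < 1"
proof -
  have "\<mu> * lam > 0" using mu_pos lam_pos by simp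
  then show ?thesis unfolding \<alpha>_def by (simp add: divide_less_eq)
qed

text \<open>Since \<open>(a (Suc k) / A (Suc k))\<^sup>2 \<ge> lambda (Suc k) * \<mu> / (1 + lambda (Suc k) * \<mu>) \<ge> \<alpha>\<^sup>2\<close>,
  the weights \<open>A k\<close> grow geometrically.\<close>

lemma A_le_contract: "A k \<le> (1 - \<alpha>) * A (Suc k)"
proof -
  define l where "l = lambda (Suc k)"
  define a' where "a' = a (Suc k)"
  define A' where "A' = A (Suc k)"
  have l: "l > 0" unfolding l_def using lambda_pos by simp
  have A': "A' = A k + a'" unfolding A'_def a'_def using A_Suc by simp
  have a': "a' > 0" unfolding a'_def by (rule a_pos)
  have A'_pos: "A' > 0" using A' A_nonneg[of k] a' by simp
  have "a'\<^sup>2 * (1 + l * \<mu>) = l * A' + l * \<mu> * A'\<^sup>2"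
    using a_Suc_sq[of k] unfolding A' a'_def[symmetric] l_def[symmetric]
    by (simp add: algebra_simps power2_eq_square)
  moreover have "(a' / A')\<^sup>2 = a'\<^sup>2 * (1 + l * \<mu>) / ((1 + l * \<mu>) * A'\<^sup>2)"
    using l mu_pos by (simp add: power_divide add_nonneg_eq_0_iff)
  ultimately have "(a' / A')\<^sup>2 = (l * A' + l * \<mu> * A'\<^sup>2) / ((1 + l * \<mu>) * A'\<^sup>2)"
    by simp
  also have "\<dots> \<ge> (l * \<mu> * A'\<^sup>2) / ((1 + l * \<mu>) * A'\<^sup>2)"
    using A'_pos l mu_pos by (intro divide_right_mono) (auto simp: add_pos_pos)
  finally have "(a' / A')\<^sup>2 \<ge> l * \<mu> / (1 + l * \<mu>)" using A'_pos by simp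
  moreover have "\<mu> * lam / (1 + \<mu> * lam) \<le> l * \<mu> / (1 + l * \<mu>)"
  proof -
    have "\<mu> * lam \<le> \<mu> * l" using lambda_ge[of "Suc k"] mu_pos unfolding l_def by simp
    then show ?thesis using mu_pos lam_pos l by (simp add: field_simps add_pos_pos)
  qed
  ultimately have "\<alpha> \<le> sqrt ((a' / A')\<^sup>2)"
    unfolding \<alpha>_def by (intro real_sqrt_le_mono) linarith
  also have "\<dots> = a' / A'" using A'_pos a' by simp
  finally have "\<alpha> * A' \<le> a'" using A'_pos by (simp add: field_simps)
  then show ?thesis unfolding A'_def[symmetric] using A' by (simp add: algebra_simps)
qed

lemma lam_le_A: "k \<ge> 1 \<Longrightarrow> lam \<le> A k * (1 - \<alpha>) ^ (k - 1)"
proof (induction k rule: nat_induct_at_least)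
  case base
  have "lam \<le> lambda 1" using lambda_ge by simp
  also have "\<dots> \<le> A 1" using a_Suc_ge[of 0] A_Suc[of 0] A_0 by simp
  finally show ?case by simp
next
  case (Suc n)
  have "A n * (1 - \<alpha>) ^ (n - 1) \<le> (1 - \<alpha>) * A (Suc n) * (1 - \<alpha>) ^ (n - 1)"
    using A_le_contract[of n] alpha_less_1 by (intro mult_right_mono) auto
  also have "\<dots> = A (Suc n) * (1 - \<alpha>) ^ (Suc n - 1)"
    using Suc(1) by (cases n) auto
  finally show ?case using Suc by linarith
qed

lemma gap_and_dist_sq_bounds:
  assumes k: "k \<ge> 1"
  shows "h (y k) - h xstar \<le> d0\<^sup>2 / (2 * lam) * (1 - \<alpha>) ^ (k - 1)"
    and "(norm (xstar - y k))\<^sup>2 \<le> d0\<^sup>2 / (\<mu> * lam) * (1 - \<alpha>) ^ (k - 1)"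
    and "(norm (xstar - x k))\<^sup>2 \<le> d0\<^sup>2 / (\<mu> * lam) * (1 - \<alpha>) ^ (k - 1)"
proof -
  define R where "R = (1 - \<alpha>) ^ (k - 1)"
  have R: "R > 0" unfolding R_def using alpha_less_1 by simp
  have AR: "lam \<le> A k * R" unfolding R_def by (rule lam_le_A[OF k])
  obtain j where j: "k = Suc j" using k by (cases k) auto
  have growth: "\<mu> / 2 * (norm (xstar - y k))\<^sup>2 \<le> h (y k) - h xstar"
    using quadratic_growth[OF finite_at_iterate[of j]] unfolding j by (simp add: norm_minus_commute)
  moreover have "\<mu> / 2 * (norm (xstar - y k))\<^sup>2 \<ge> 0" using mu_pos by simp
  ultimately have gap_nonneg: "h (y k) - h xstar \<ge> 0" by linarith
  have A: "A k \<ge> 0" by (rule A_nonneg)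
  have "A k * (h (y k) - h xstar) \<ge> 0" using A gap_nonneg by simp
  moreover have "(1 + \<mu> * A k) / 2 * (norm (xstar - x k))\<^sup>2 \<ge> 0" using A mu_pos by simp
  ultimately have gap_A: "A k * (h (y k) - h xstar) \<le> d0\<^sup>2 / 2"
    and dist_A: "(1 + \<mu> * A k) / 2 * (norm (xstar - x k))\<^sup>2 \<le> d0\<^sup>2 / 2"
    using potential_le[of k] unfolding potential_def by linarith+
  have "(h (y k) - h xstar) * lam \<le> (A k * (h (y k) - h xstar)) * R"
    using mult_left_mono[OF AR gap_nonneg] by (simp add: mult_ac)
  also have "\<dots> \<le> d0\<^sup>2 / 2 * R" using mult_right_mono[OF gap_A] R by simp
  finally have gap: "h (y k) - h xstar \<le> d0\<^sup>2 / (2 * lam) * R" using lam_pos by (simp add: field_simps)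
  then show "h (y k) - h xstar \<le> d0\<^sup>2 / (2 * lam) * (1 - \<alpha>) ^ (k - 1)" unfolding R_def .
  have "\<mu> / 2 * (norm (xstar - y k))\<^sup>2 \<le> d0\<^sup>2 / (2 * lam) * R" using growth gap by linarith
  then show "(norm (xstar - y k))\<^sup>2 \<le> d0\<^sup>2 / (\<mu> * lam) * (1 - \<alpha>) ^ (k - 1)"
    using mu_pos lam_pos unfolding R_def by (simp add: field_simps)
  have "\<mu> * lam * (norm (xstar - x k))\<^sup>2 \<le> \<mu> * (A k * R) * (norm (xstar - x k))\<^sup>2"
    using AR mu_pos by (intro mult_right_mono mult_left_mono) auto
  also have "\<dots> = (\<mu> * A k * (norm (xstar - x k))\<^sup>2) * R"
    by (simp add: mult_ac)
  also have "\<dots> \<le> (1 + \<mu> * A k) * (norm (xstar - x k))\<^sup>2 * R"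
    using R by (intro mult_right_mono) (auto simp: distrib_right)
  also have "\<dots> \<le> d0\<^sup>2 * R" using dist_A R by (intro mult_right_mono) auto
  finally show "(norm (xstar - x k))\<^sup>2 \<le> d0\<^sup>2 / (\<mu> * lam) * (1 - \<alpha>) ^ (k - 1)"
    using mu_pos lam_pos unfolding R_def by (simp add: field_simps)
qed

lemma dist_bounds:
  assumes k: "k \<ge> 1"
  shows "norm (xstar - y k) \<le> d0 / sqrt (\<mu> * lam) * sqrt ((1 - \<alpha>) ^ (k - 1))"
    and "norm (xstar - x k) \<le> d0 / sqrt (\<mu> * lam) * sqrt ((1 - \<alpha>) ^ (k - 1))"
proof -
  have sqrt_bound: "norm u \<le> d0 / sqrt (\<mu> * lam) * sqrt ((1 - \<alpha>) ^ (k - 1))"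
    if "(norm u)\<^sup>2 \<le> d0\<^sup>2 / (\<mu> * lam) * (1 - \<alpha>) ^ (k - 1)" for u :: 'a
  proof -
    have "norm u \<le> sqrt (d0\<^sup>2 / (\<mu> * lam) * (1 - \<alpha>) ^ (k - 1))"
      using that by (rule real_le_rsqrt)
    also have "\<dots> = d0 / sqrt (\<mu> * lam) * sqrt ((1 - \<alpha>) ^ (k - 1))"
      unfolding d0_def by (simp add: real_sqrt_mult real_sqrt_divide)
    finally show ?thesis .
  qed
  show "norm (xstar - y k) \<le> d0 / sqrt (\<mu> * lam) * sqrt ((1 - \<alpha>) ^ (k - 1))"
    by (rule sqrt_bound[OF gap_and_dist_sq_bounds(2)[OF k]])
  show "norm (xstar - x k) \<le> d0 / sqrt (\<mu> * lam) * sqrt ((1 - \<alpha>) ^ (k - 1))"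
    by (rule sqrt_bound[OF gap_and_dist_sq_bounds(3)[OF k]])
qed

lemma displacement_bound:
  assumes k: "k \<ge> 1"
  shows "norm (y (Suc k) - xt k) \<le> 2 * (d0 / sqrt (\<mu> * lam) * sqrt ((1 - \<alpha>) ^ (k - 1)))"
proof -
  define r where "r = d0 / sqrt (\<mu> * lam) * sqrt ((1 - \<alpha>) ^ (k - 1))"
  have "sqrt ((1 - \<alpha>) ^ k) \<le> sqrt ((1 - \<alpha>) ^ (k - 1))"
    using alpha_nonneg alpha_less_1 by (intro real_sqrt_le_mono power_decreasing) auto
  moreover have "d0 / sqrt (\<mu> * lam) \<ge> 0" using mu_pos lam_pos unfolding d0_def by simp
  ultimately have "d0 / sqrt (\<mu> * lam) * sqrt ((1 - \<alpha>) ^ k) \<le> r"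
    unfolding r_def by (rule mult_left_mono)
  then have y_Suc: "norm (xstar - y (Suc k)) \<le> r"
    using dist_bounds(1)[of "Suc k"] by simp
  define l A' a' where "l = lambda (Suc k)" and "A' = A k" and "a' = a (Suc k)"
  define c where "c = (a' - \<mu> * A' * l) / (A' + a')"
  have l: "l > 0" unfolding l_def using lambda_pos by simp
  have A': "A' \<ge> 0" unfolding A'_def by (rule A_nonneg)
  have pos: "A' + a' > 0" using A' a_pos[of k] unfolding a'_def by simp
  have "\<mu> * A' * l \<le> (1 + 2 * \<mu> * A') * l" using A' mu_pos l by (simp add: algebra_simps)
  then have c_nonneg: "c \<ge> 0"
    using a_Suc_ge[OF A_nonneg, of k] pos unfolding c_def A'_def a'_def l_def by simp
  have c_le_1: "c \<le> 1" unfolding c_def using pos A' mu_pos l by (simp add: field_simps)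
  have "1 - c = (A' + \<mu> * A' * l) / (A' + a')"
    unfolding c_def using pos by (simp add: field_simps)
  then have "xt k = c *\<^sub>R x k + (1 - c) *\<^sub>R y k"
    using xt_eq[of k] unfolding c_def A'_def a'_def l_def by simp
  then have "xt k - xstar = c *\<^sub>R (x k - xstar) + (1 - c) *\<^sub>R (y k - xstar)"
    by (simp add: algebra_simps)
  then have "norm (xt k - xstar) \<le> c * norm (xstar - x k) + (1 - c) * norm (xstar - y k)"
    using c_nonneg c_le_1 norm_triangle_ineq[of "c *\<^sub>R (x k - xstar)" "(1 - c) *\<^sub>R (y k - xstar)"]
    by (simp add: norm_minus_commute)
  also have "\<dots> \<le> c * r + (1 - c) * r"
    using dist_bounds[OF k] c_nonneg c_le_1 unfolding r_def by (intro add_mono mult_left_mono) auto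
  finally have xt: "norm (xt k - xstar) \<le> r" by (simp add: algebra_simps)
  have "norm (y (Suc k) - xt k) \<le> norm (y (Suc k) - xstar) + norm (xt k - xstar)"
    using norm_triangle_ineq4[of "y (Suc k) - xstar" "xt k - xstar"] by simp
  then show ?thesis using y_Suc xt unfolding r_def by (simp add: norm_minus_commute)
qed

lemma v_norm_bound:
  assumes k: "k \<ge> 1"
  shows "norm (v (Suc k)) \<le> (1 + \<sigma> * sqrt (1 + lam * \<mu>)) / lam
           * (2 * (d0 / sqrt (\<mu> * lam) * sqrt ((1 - \<alpha>) ^ (k - 1))))"
proof -
  define l where "l = lambda (Suc k)"
  define e where "e = y (Suc k) - xt k"
  have l: "l > 0" and lam_l: "lam \<le> l" unfolding l_def using lambda_pos lambda_ge by auto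
  have "norm (l *\<^sub>R v (Suc k) + e) \<le> \<sigma> * sqrt (1 + l * \<mu>) * norm e"
    using relative_error_bounds(1)[OF lambda_pos mu_pos sigma_nonneg eps_nonneg error_criterion, of k]
    unfolding l_def e_def by (simp add: algebra_simps)
  then have "l * norm (v (Suc k)) \<le> (1 + \<sigma> * sqrt (1 + l * \<mu>)) * norm e"
    using norm_triangle_ineq4[of "l *\<^sub>R v (Suc k) + e" e] l by (simp add: algebra_simps)
  then have "norm (v (Suc k)) \<le> (1 + \<sigma> * sqrt (1 + l * \<mu>)) / l * norm e"
    using l by (simp add: field_simps)
  also have "\<dots> \<le> (1 + \<sigma> * sqrt (1 + lam * \<mu>)) / lam * norm e"
    using relative_error_factor_antimono[OF lam_pos lam_l mu_pos sigma_nonneg]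
    by (intro mult_right_mono) auto
  also have "\<dots> \<le> (1 + \<sigma> * sqrt (1 + lam * \<mu>)) / lam * (2 * (d0 / sqrt (\<mu> * lam) * sqrt ((1 - \<alpha>) ^ (k - 1))))"
    using displacement_bound[OF k] sigma_nonneg lam_pos mu_pos unfolding e_def
    by (intro mult_left_mono) auto
  finally show ?thesis .
qed

lemma eps_bound:
  assumes k: "k \<ge> 1"
  shows "\<epsilon> (Suc k) \<le> 2 * \<sigma>\<^sup>2 * d0\<^sup>2 / (\<mu> * lam\<^sup>2) * (1 - \<alpha>) ^ (k - 1)"
proof -
  define R where "R = (1 - \<alpha>) ^ (k - 1)"
  have R: "R > 0" unfolding R_def using alpha_less_1 by simp
  define l where "l = lambda (Suc k)"
  have lam_l: "lam \<le> l" unfolding l_def using lambda_ge by auto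
  have "(norm (y (Suc k) - xt k))\<^sup>2 \<le> (2 * (d0 / sqrt (\<mu> * lam) * sqrt R))\<^sup>2"
    using displacement_bound[OF k] unfolding R_def by (intro power_mono) auto
  also have "\<dots> = 4 * (d0\<^sup>2 / (\<mu> * lam)) * R"
    using R mu_pos lam_pos by (simp add: power_mult_distrib power_divide)
  finally have displacement: "(norm (y (Suc k) - xt k))\<^sup>2 \<le> 4 * (d0\<^sup>2 / (\<mu> * lam)) * R" .
  have "2 * lam * \<epsilon> (Suc k) \<le> 2 * l * \<epsilon> (Suc k)"
    using lam_l eps_nonneg by (simp add: mult_right_mono)
  also have "\<dots> \<le> \<sigma>\<^sup>2 * (norm (y (Suc k) - xt k))\<^sup>2"
    using relative_error_bounds(2)[OF lambda_pos mu_pos sigma_nonneg eps_nonneg error_criterion, of k]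
    unfolding l_def .
  also have "\<dots> \<le> \<sigma>\<^sup>2 * (4 * (d0\<^sup>2 / (\<mu> * lam)) * R)"
    using displacement by (intro mult_left_mono) auto
  finally show ?thesis
    using lam_pos mu_pos unfolding R_def by (simp add: field_simps power2_eq_square)
qed

lemma function_value_rate:
  assumes "k \<ge> 1"
  shows "(f (y k) + g (y k)) - (f xstar + g xstar) \<le> ereal (d0\<^sup>2 / (2 * lam) * (1 - \<alpha>) ^ (k - 1))"
proof -
  obtain j where "k = Suc j" using assms by (cases k) auto
  then show ?thesis
    using h_gap[OF finite_at_iterate[of j]] gap_and_dist_sq_bounds(1)[OF assms] by simp
qed

lemma iterate_distance_rate:
  assumes "k \<ge> 1"
  shows "max (norm (xstar - y k)) (norm (xstar - x k))
           \<le> d0 / sqrt (\<mu> * lam) * (1 - \<alpha>) powr ((real k - 1) / 2)"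
  using dist_bounds[OF assms] powr_half_eq_sqrt_power[OF _ assms, of "1 - \<alpha>"] alpha_less_1
  by simp

lemma v_norm_rate:
  assumes k: "k \<ge> 1"
  shows "norm (v (Suc k)) \<le> sqrt 6 * (1 + \<sigma> * sqrt (1 + \<mu> * lam)) / (sqrt \<mu> * lam powr (3/2))
           * d0 * (1 - \<alpha>) powr ((real k - 1) / 2)"
proof -
  define R where "R = (1 - \<alpha>) ^ (k - 1)"
  define c where "c = (1 + \<sigma> * sqrt (1 + \<mu> * lam)) / lam"
  define r where "r = d0 / sqrt (\<mu> * lam) * sqrt R"
  have c: "c \<ge> 0" unfolding c_def using sigma_nonneg mu_pos lam_pos by simp
  have r: "r \<ge> 0" unfolding r_def d0_def R_def using mu_pos lam_pos alpha_less_1 by simp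
  have "norm (v (Suc k)) \<le> c * (2 * r)"
    using v_norm_bound[OF k] unfolding c_def r_def R_def by (simp add: mult.commute)
  also have "\<dots> \<le> c * (sqrt 6 * r)"
    using c r real_le_rsqrt[of 2 6] by (intro mult_left_mono mult_right_mono) auto
  also have "\<dots> = sqrt 6 * (1 + \<sigma> * sqrt (1 + \<mu> * lam)) / (sqrt \<mu> * lam powr (3/2)) * d0 * sqrt R"
    unfolding c_def r_def using powr_three_halves[OF lam_pos] mu_pos lam_pos
    by (simp add: real_sqrt_mult field_simps)
  finally show ?thesis
    using powr_half_eq_sqrt_power[OF _ k, of "1 - \<alpha>"] alpha_less_1 unfolding R_def by simp
qed

lemma eps_rate:
  assumes "k \<ge> 1"
  shows "\<epsilon> (Suc k) \<le> 3 * \<sigma>\<^sup>2 * d0\<^sup>2 / (\<mu> * lam\<^sup>2) * (1 - \<alpha>) ^ (k - 1)"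
proof -
  have "2 * \<sigma>\<^sup>2 * d0\<^sup>2 / (\<mu> * lam\<^sup>2) * (1 - \<alpha>) ^ (k - 1) \<le> 3 * \<sigma>\<^sup>2 * d0\<^sup>2 / (\<mu> * lam\<^sup>2) * (1 - \<alpha>) ^ (k - 1)"
    using mu_pos alpha_less_1 by (intro mult_right_mono divide_right_mono) auto
  then show ?thesis using eps_bound[OF assms] by linarith
qed

end

theorem theorem2p9:
  fixes f g :: "'a::euclidean_space \<Rightarrow> ereal"
    and \<mu> \<sigma> lam :: real and xstar :: 'a
    and lambda a A \<epsilon> :: "nat \<Rightarrow> real"
    and x y v xt :: "nat \<Rightarrow> 'a"
  assumes f: "proper_fun f" "closed_fun f" "convex_fun f"
    and g: "proper_fun g" "closed_fun g" "convex_fun g"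
    and mu: "\<mu> > 0" and gsc: "strongly_convex_fun \<mu> g"
    and dom: "\<exists>z. f z + g z \<noteq> \<infinity>"
    and xstar: "\<forall>z. f xstar + g xstar \<le> f z + g z"
    and sigma: "0 \<le> \<sigma>" "\<sigma> \<le> 1"
    and A0: "A 0 = 0"
    and lampos: "\<forall>k. lambda (Suc k) > 0"
    and a_def: "\<forall>k. a (Suc k) =
        ((1 + 2 * \<mu> * A k) * lambda (Suc k)
          + sqrt (((1 + 2 * \<mu> * A k))\<^sup>2 * (lambda (Suc k))\<^sup>2
                  + 4 * (1 + \<mu> * A k) * A k * lambda (Suc k))) / 2"
    and xt_def: "\<forall>k. xt k =
        ((a (Suc k) - \<mu> * A k * lambda (Suc k)) / (A k + a (Suc k))) *\<^sub>R x k
        + ((A k + \<mu> * A k * lambda (Suc k)) / (A k + a (Suc k))) *\<^sub>R y k"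
    and eps_nn: "\<forall>k. \<epsilon> (Suc k) \<ge> 0"
    and incl: "\<forall>k. \<exists>u w. u \<in> eps_subdiff f (\<epsilon> (Suc k)) (y (Suc k))
                        \<and> w \<in> subdiff g (y (Suc k)) \<and> v (Suc k) = u + w"
    and err: "\<forall>k. (norm (lambda (Suc k) *\<^sub>R v (Suc k) + y (Suc k) - xt k))\<^sup>2
                    / (1 + lambda (Suc k) * \<mu>)
                  + 2 * lambda (Suc k) * \<epsilon> (Suc k)
                \<le> \<sigma>\<^sup>2 * (norm (y (Suc k) - xt k))\<^sup>2"
    and A_def: "\<forall>k. A (Suc k) = A k + a (Suc k)"
    and x_def: "\<forall>k. x (Suc k) =
        ((1 + \<mu> * A k) / (1 + \<mu> * A (Suc k))) *\<^sub>R x k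
        + (\<mu> * a (Suc k) / (1 + \<mu> * A (Suc k))) *\<^sub>R y (Suc k)
        - (a (Suc k) / (1 + \<mu> * A (Suc k))) *\<^sub>R v (Suc k)"
    and lam: "lam > 0" "\<forall>k\<ge>1. lambda k \<ge> lam"
  shows "let d0 = norm (xstar - x 0);
             \<alpha> = sqrt (\<mu> * lam / (1 + \<mu> * lam))
         in (\<forall>k\<ge>1.
               (f (y k) + g (y k)) - (f xstar + g xstar)
                 \<le> ereal (d0\<^sup>2 / (2 * lam) * (1 - \<alpha>) ^ (k - 1))
             \<and> max (norm (xstar - y k)) (norm (xstar - x k))
                 \<le> d0 / sqrt (\<mu> * lam) * (1 - \<alpha>) powr ((real k - 1) / 2))
          \<and> (\<forall>k\<ge>1.
               (\<exists>u w. u \<in> eps_subdiff f (\<epsilon> (Suc k)) (y (Suc k))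
                      \<and> w \<in> subdiff g (y (Suc k)) \<and> v (Suc k) = u + w)
             \<and> norm (v (Suc k))
                 \<le> sqrt 6 * (1 + \<sigma> * sqrt (1 + \<mu> * lam)) / (sqrt \<mu> * lam powr (3/2))
                    * d0 * (1 - \<alpha>) powr ((real k - 1) / 2)
             \<and> \<epsilon> (Suc k) \<le> 3 * \<sigma>\<^sup>2 * d0\<^sup>2 / (\<mu> * lam\<^sup>2) * (1 - \<alpha>) ^ (k - 1))"
proof -
  interpret accelerated_hpe_bounded_steps f g \<mu> \<sigma> xstar lambda a A \<epsilon> x y v xt lam
    by unfold_locales (use f g mu gsc dom xstar sigma A0 lampos a_def xt_def eps_nn incl err A_def x_def lam
      in simp_all)
  show ?thesis
    unfolding Let_def d0_def[symmetric] \<alpha>_def[symmetric]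
    using function_value_rate iterate_distance_rate inclusion v_norm_rate eps_rate by blast
qed

end
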